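(* Let $\nu>0$ and $\epsilon\in\{0,1\}$, and let $\mathcal T:(X,T,U)\mapsto(x,t,u)$ be $$x=\frac X\nu+\frac T{\nu^3}-\frac T{\sqrt\nu},\qquad t=\frac T{\sqrt\nu},\qquad u=\frac U{\sqrt\nu}+\frac13\nu^{-5/2}-\frac13 .$$ Then the equation $$-2\nu^2U_XU_{XX}+3\epsilon U_XU-\nu^2U_{XXX}U+\tfrac23U_{XXX}-\tfrac23\nu^{5/2}U_{XXX}+\epsilon U_T-\nu^2U_{XXT}=0\qquad(E_{\nu,\epsilon})$$ describes pseudo-spherical surfaces with associated one-forms $\mathcal T^*\omega^i$, $i=1,2,3$, where $\omega^i$ are the one-forms of the following setting: for real $\alpha\neq0$, $\beta$ with $\alpha^2+\beta^2-1=\epsilon((\beta-1)/\alpha)^2$ and $m=u_{xx}-\epsilon u$, $\omega^1=(m-\beta+\epsilon\alpha^{-2}(\beta-1))dx+(-\beta u_x/\alpha-\beta/\alpha^2-um-1+u\beta+u_x/\alpha+1/\alpha^2)dt$, $\omega^2=\alpha\,dx+(-\beta/\alpha-\alpha u+1/\alpha+u_x)dt$, $\omega^3=(m+1)dx+(\epsilon u\alpha^{-2}(\beta-1)-um+1/\alpha^2+u_x/\alpha-u-\beta/\alpha^2-\beta u_x/\alpha)dt$. Here the pullback is computed by substituting $dx=\nu^{-1}dX+(\nu^{-3}-\nu^{-1/2})dT$, $dt=\nu^{-1/2}dT$, $u=U/\sqrt\nu+\frac13\nu^{-5/2}-\frac13$, $u_x=\sqrt\nu\,U_X$, $u_{x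x}=\nu^{3/2}U_{XX}$.
   Context: An equation describes pseudo-spherical surfaces if there are one-forms $\omega^i=f_{i1}dX+f_{i2}dT\neq0$ ($i=1,2,3$), with coefficients smooth functions of the independent variables, $U$ and finitely many derivatives of $U$, whose pullbacks by any solution satisfy $d\omega^1=\omega^3\wedge\omega^2$, $d\omega^2=\omega^1\wedge\omega^3$, $d\omega^3=\omega^1\wedge\omega^2$. *)

theory Defs
  imports "HOL-Analysis.Analysis"
begin

coinductive smooth_on :: "'a::euclidean_space set \<Rightarrow> ('a \<Rightarrow> real) \<Rightarrow> bool" where
  "(\<forall>x\<in>S. f differentiable at x) \<Longrightarrow>
   (\<forall>i\<in>Basis. smooth_on S (\<lambda>x. frechet_derivative f (at x) i)) \<Longrightarrow>
   smooth_on S f"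

definition pX :: "(real \<times> real \<Rightarrow> real) \<Rightarrow> real \<times> real \<Rightarrow> real" where
  "pX g p = frechet_derivative g (at p) (1, 0)"

definition pT :: "(real \<times> real \<Rightarrow> real) \<Rightarrow> real \<times> real \<Rightarrow> real" where
  "pT g p = frechet_derivative g (at p) (0, 1)"

text \<open>Jet coordinates (X, T, U, U_X, U_XX).  A one-form
  omega = a dX + b dT is given by its two coefficient functions on jet space.\<close>

type_synonym jet = "real \<times> real \<times> real \<times> real \<times> real"

definition jet_of :: "(real \<times> real \<Rightarrow> real) \<Rightarrow> real \<times> real \<Rightarrow> jet" where
  "jet_of U p = (fst p, snd p, U p, pX U p, pX (pX U) p)"

text \<open>An equation is a differential operator E: E U p = 0 means U satisfies
  the equation at the point p.  Forms are indexed by i in {1,2,3}: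
  omega^i = a i dX + b i dT.\<close>

definition describes_pss_with ::
  "((real \<times> real \<Rightarrow> real) \<Rightarrow> real \<times> real \<Rightarrow> real)
   \<Rightarrow> (nat \<Rightarrow> jet \<Rightarrow> real) \<Rightarrow> (nat \<Rightarrow> jet \<Rightarrow> real) \<Rightarrow> bool" where
  "describes_pss_with E a b \<longleftrightarrow>
     (\<forall>i\<in>{1,2,3::nat}.
        smooth_on UNIV (a i) \<and> smooth_on UNIV (b i) \<and>
        (\<exists>z. a i z \<noteq> 0 \<or> b i z \<noteq> 0)) \<and>
     (\<forall>S U. open S \<longrightarrow> smooth_on S U \<longrightarrow> (\<forall>p\<in>S. E U p = 0) \<longrightarrow>
        (let A = (\<lambda>i p. a i (jet_of U p)); B = (\<lambda>i p. b i (jet_of U p)) in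
         \<forall>p\<in>S.
           pX (B 1) p - pT (A 1) p = A 3 p * B 2 p - B 3 p * A 2 p \<and>
           pX (B 2) p - pT (A 2) p = A 1 p * B 3 p - B 1 p * A 3 p \<and>
           pX (B 3) p - pT (A 3) p = A 1 p * B 2 p - B 1 p * A 2 p))"

definition E_eq :: "real \<Rightarrow> real \<Rightarrow> (real \<times> real \<Rightarrow> real) \<Rightarrow> real \<times> real \<Rightarrow> real" where
  "E_eq \<nu> \<epsilon> U p =
     - 2 * \<nu>^2 * pX U p * pX (pX U) p + 3 * \<epsilon> * pX U p * U p
     - \<nu>^2 * pX (pX (pX U)) p * U p + 2/3 * pX (pX (pX U)) p
     - 2/3 * \<nu> powr (5/2) * pX (pX (pX U)) p + \<epsilon> * pT U p
     - \<nu>^2 * pT (pX (pX U)) p"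

definition om_dx :: "real \<Rightarrow> real \<Rightarrow> real \<Rightarrow> nat \<Rightarrow> real \<Rightarrow> real \<Rightarrow> real \<Rightarrow> real" where
  "om_dx \<epsilon> \<alpha> \<beta> i u ux uxx =
     (let m = uxx - \<epsilon> * u in
      if i = 1 then m - \<beta> + \<epsilon> * \<alpha> powi (-2) * (\<beta> - 1)
      else if i = 2 then \<alpha>
      else m + 1)"

definition om_dt :: "real \<Rightarrow> real \<Rightarrow> real \<Rightarrow> nat \<Rightarrow> real \<Rightarrow> real \<Rightarrow> real \<Rightarrow> real" where
  "om_dt \<epsilon> \<alpha> \<beta> i u ux uxx =
     (let m = uxx - \<epsilon> * u in
      if i = 1 then - \<beta> * ux / \<alpha> - \<beta> / \<alpha>^2 - u * m - 1 + u * \<beta> + ux / \<alpha> + 1 / \<alpha>^2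
      else if i = 2 then - \<beta> / \<alpha> - \<alpha> * u + 1 / \<alpha> + ux
      else \<epsilon> * u * \<alpha> powi (-2) * (\<beta> - 1) - u * m + 1 / \<alpha>^2 + ux / \<alpha> - u
           - \<beta> / \<alpha>^2 - \<beta> * ux / \<alpha>)"

definition pb_u :: "real \<Rightarrow> real \<Rightarrow> real" where
  "pb_u \<nu> U = U / sqrt \<nu> + 1/3 * \<nu> powr (-5/2) - 1/3"

definition pb_dX :: "real \<Rightarrow> real \<Rightarrow> real \<Rightarrow> real \<Rightarrow> nat \<Rightarrow> jet \<Rightarrow> real" where
  "pb_dX \<nu> \<epsilon> \<alpha> \<beta> i z =
     (case z of (X, T, U, UX, UXX) \<Rightarrow>
        om_dx \<epsilon> \<alpha> \<beta> i (pb_u \<nu> U) (sqrt \<nu> * UX) (\<nu> powr (3/2) * UXX) * \<nu> powr (-1))"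

definition pb_dT :: "real \<Rightarrow> real \<Rightarrow> real \<Rightarrow> real \<Rightarrow> nat \<Rightarrow> jet \<Rightarrow> real" where
  "pb_dT \<nu> \<epsilon> \<alpha> \<beta> i z =
     (case z of (X, T, U, UX, UXX) \<Rightarrow>
        om_dx \<epsilon> \<alpha> \<beta> i (pb_u \<nu> U) (sqrt \<nu> * UX) (\<nu> powr (3/2) * UXX)
          * (\<nu> powr (-3) - \<nu> powr (-1/2))
        + om_dt \<epsilon> \<alpha> \<beta> i (pb_u \<nu> U) (sqrt \<nu> * UX) (\<nu> powr (3/2) * UXX)
          * \<nu> powr (-1/2))"

end

theory Submission
  imports Defs
begin

(* In the coordinates (x, t) of the transformation the coordinate vector fields are
   d/dx = nu d/dX and d/dt = sqrt nu (d/dT - kappa nu d/dX), kappa = nu^-3 - nu^(-1/2), so along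
   u = T(U) one has u_x = sqrt nu U_X, u_xx = nu^(3/2) U_XX, and E_{nu,eps} is minus the equation
   m_t + u m_x + 2 u_x m = 0, m = u_xx - eps u, written in (X, T).  For solutions of that equation
   the forms omega^i satisfy the structure equations, by a polynomial identity that uses
   alpha^2 + beta^2 - 1 = eps ((beta - 1)/alpha)^2 and eps^2 = eps.  Since
   dx ^ dt = nu^(-3/2) dX ^ dT, both sides of each structure equation pull back with the same
   factor.  The coefficients of the pulled-back forms are polynomials in the jet variables, hence
   smooth. *)

lemma frechet_derivative_add_apply:
  assumes "f differentiable at p" "g differentiable at p"
  shows "frechet_derivative (\<lambda>x. f x + g x) (at p) v
       = frechet_derivative f (at p) v + frechet_derivative g (at p) v"
  using has_derivative_add[OF assms[unfolded frechet_derivative_works]]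
  by (simp add: frechet_derivative_at[symmetric])

lemma frechet_derivative_diff_apply:
  assumes "f differentiable at p" "g differentiable at p"
  shows "frechet_derivative (\<lambda>x. f x - g x) (at p) v
       = frechet_derivative f (at p) v - frechet_derivative g (at p) v"
  using has_derivative_diff[OF assms[unfolded frechet_derivative_works]]
  by (simp add: frechet_derivative_at[symmetric])

lemma frechet_derivative_minus_apply:
  assumes "f differentiable at p"
  shows "frechet_derivative (\<lambda>x. - f x) (at p) v = - frechet_derivative f (at p) v"
  using has_derivative_minus[OF assms[unfolded frechet_derivative_works]]
  by (simp add: frechet_derivative_at[symmetric])

lemma frechet_derivative_mult_apply:
  fixes f g :: "'a::real_normed_vector \<Rightarrow> real"
  assumes "f differentiable at p" "g differentiable at p"
  shows "frechet_derivative (\<lambda>x. f x * g x) (at p) v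
       = f p * frechet_derivative g (at p) v + frechet_derivative f (at p) v * g p"
  using has_derivative_mult[OF assms[unfolded frechet_derivative_works]]
  by (simp add: frechet_derivative_at[symmetric])

lemma frechet_derivative_divide_const_apply:
  fixes f :: "'a::real_normed_vector \<Rightarrow> real"
  assumes "f differentiable at p"
  shows "frechet_derivative (\<lambda>x. f x / c) (at p) v = frechet_derivative f (at p) v / c"
  using bounded_linear.has_derivative[OF bounded_linear_divide[of c],
      OF assms[unfolded frechet_derivative_works]]
  by (simp add: frechet_derivative_at[symmetric])

lemmas frechet_derivative_arith_apply =
  frechet_derivative_add_apply frechet_derivative_diff_apply frechet_derivative_minus_apply
  frechet_derivative_mult_apply frechet_derivative_divide_const_apply

lemma frechet_derivative_pair_apply:
  fixes g :: "real \<times> real \<Rightarrow> real"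
  assumes "g differentiable at p"
  shows "frechet_derivative g (at p) (x, y) = x * pX g p + y * pT g p"
proof -
  interpret linear "frechet_derivative g (at p)"
    by (rule linear_frechet_derivative[OF assms])
  have "frechet_derivative g (at p) (x *\<^sub>R (1, 0) + y *\<^sub>R (0, 1))
      = x * pX g p + y * pT g p"
    by (simp only: add scale pX_def pT_def) simp
  then show ?thesis by simp
qed

lemma powr_half_nat: "0 < x \<Longrightarrow> x powr (real n / 2) = sqrt x ^ n"
  by (simp add: powr_half_sqrt[symmetric] powr_realpow[symmetric] powr_powr)

lemma real_polynomial_function_frechet_derivative:
  "real_polynomial_function f
    \<Longrightarrow> real_polynomial_function (\<lambda>x. frechet_derivative f (at x) v)"
proof (induction rule: real_polynomial_function.induct)
  case (linear f)
  then show ?case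
    using frechet_derivative_at[OF bounded_linear.has_derivative[OF linear has_derivative_ident]]
    by (simp add: real_polynomial_function.intros)
next
  case (add f g)
  then show ?case
    by (simp add: frechet_derivative_add_apply differentiable_at_real_polynomial_function
        real_polynomial_function.intros)
next
  case (mult f g)
  then show ?case
    by (simp add: frechet_derivative_mult_apply differentiable_at_real_polynomial_function
        real_polynomial_function.intros)
qed (simp add: real_polynomial_function.intros)

lemma smooth_on_real_polynomial_function:
  assumes "real_polynomial_function f"
  shows "smooth_on S f"
  using assms
proof (coinduction arbitrary: f)
  case smooth_on
  then show ?case
    by (auto simp: differentiable_at_real_polynomial_function
        real_polynomial_function_frechet_derivative)
qed

lemma smooth_on_imp_differentiable:
  "smooth_on S f \<Longrightarrow> x \<in> S \<Longrightarrow> f differentiable at x"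
  by (erule smooth_on.cases) auto

lemma smooth_on_pX:
  assumes "smooth_on S f"
  shows "smooth_on S (pX f)"
proof -
  have "(1, 0) \<in> (Basis :: (real \<times> real) set)"
    by (simp add: Basis_prod_def)
  with assms show ?thesis
    by (auto elim: smooth_on.cases simp: pX_def[abs_def])
qed

(* vx and vt play the roles of d/dx and d/dt, and eq is m_t + u m_x + 2 u_x m = 0. *)
lemma om_structure_equations:
  fixes \<epsilon> \<alpha> \<beta> :: real and u ux uxx :: "real \<times> real \<Rightarrow> real"
    and a b :: "nat \<Rightarrow> real \<times> real \<Rightarrow> real" and vx vt :: "real \<times> real"
  defines "m \<equiv> \<lambda>q. uxx q - \<epsilon> * u q"
  assumes eps: "\<epsilon> \<in> {0, 1}" and al: "\<alpha> \<noteq> 0"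
    and con: "\<alpha>^2 + \<beta>^2 - 1 = \<epsilon> * ((\<beta> - 1) / \<alpha>)^2"
    and du: "u differentiable at p" and dux: "ux differentiable at p"
    and duxx: "uxx differentiable at p"
    and ux: "frechet_derivative u (at p) vx = ux p"
    and uxx: "frechet_derivative ux (at p) vx = uxx p"
    and eq: "frechet_derivative m (at p) vt + u p * frechet_derivative m (at p) vx
               + 2 * ux p * m p = 0"
    and a_def: "a = (\<lambda>i q. om_dx \<epsilon> \<alpha> \<beta> i (u q) (ux q) (uxx q))"
    and b_def: "b = (\<lambda>i q. om_dt \<epsilon> \<alpha> \<beta> i (u q) (ux q) (uxx q))"
  shows "frechet_derivative (b 1) (at p) vx - frechet_derivative (a 1) (at p) vt
           = a 3 p * b 2 p - b 3 p * a 2 p"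
    and "frechet_derivative (b 2) (at p) vx - frechet_derivative (a 2) (at p) vt
           = a 1 p * b 3 p - b 1 p * a 3 p"
    and "frechet_derivative (b 3) (at p) vx - frechet_derivative (a 3) (at p) vt
           = a 1 p * b 2 p - b 1 p * a 2 p"
proof -
  have mt: "frechet_derivative uxx (at p) vt - \<epsilon> * frechet_derivative u (at p) vt =
     - (u p * (frechet_derivative uxx (at p) vx - \<epsilon> * ux p) + 2 * ux p * (uxx p - \<epsilon> * u p))"
    using eq unfolding m_def
    by (simp add: frechet_derivative_arith_apply du duxx ux uxx algebra_simps)
  have eps_idem: "\<epsilon> * \<epsilon> = \<epsilon>" using eps by auto
  have con': "\<alpha>^2 * (\<alpha>^2 + \<beta>^2 - 1) = \<epsilon> * (\<beta> - 1)^2"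
    using con al by (simp add: field_simps)
  note derivatives = frechet_derivative_arith_apply du dux duxx ux uxx mt power_int_minus al
  show "frechet_derivative (b 1) (at p) vx - frechet_derivative (a 1) (at p) vt
           = a 3 p * b 2 p - b 3 p * a 2 p"
    unfolding a_def b_def om_dx_def om_dt_def Let_def
    by (simp add: derivatives) (simp add: field_simps al, algebra)
  show "frechet_derivative (b 2) (at p) vx - frechet_derivative (a 2) (at p) vt
           = a 1 p * b 3 p - b 1 p * a 3 p"
    unfolding a_def b_def om_dx_def om_dt_def Let_def
    by (simp add: derivatives) (use al in \<open>simp add: field_simps\<close>, use eps_idem con' in algebra)
  show "frechet_derivative (b 3) (at p) vx - frechet_derivative (a 3) (at p) vt
           = a 1 p * b 2 p - b 1 p * a 2 p"
    unfolding a_def b_def om_dx_def om_dt_def Let_def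
    by (simp add: derivatives) (use al in \<open>simp add: field_simps\<close>, use eps_idem con' in algebra)
qed

(* vx and vt are d/dx and d/dt written in the frame d/dX, d/dT. *)
lemma E_eq_in_original_coordinates:
  fixes \<nu> \<epsilon> :: real and U u ux uxx :: "real \<times> real \<Rightarrow> real" and vx vt :: "real \<times> real"
  assumes nu: "\<nu> > 0"
    and dU: "U differentiable at p" "pX U differentiable at p" "pX (pX U) differentiable at p"
    and u_def: "u = (\<lambda>q. pb_u \<nu> (U q))"
    and ux_def: "ux = (\<lambda>q. sqrt \<nu> * pX U q)"
    and uxx_def: "uxx = (\<lambda>q. \<nu> powr (3/2) * pX (pX U) q)"
    and vx_def: "vx = (\<nu>, 0)"
    and vt_def: "vt = (- sqrt \<nu> * \<nu> * (\<nu> powr (-3) - \<nu> powr (-1/2)), sqrt \<nu>)"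
  defines "m \<equiv> \<lambda>q. uxx q - \<epsilon> * u q"
  shows "frechet_derivative u (at p) vx = ux p"
    and "frechet_derivative ux (at p) vx = uxx p"
    and "frechet_derivative m (at p) vt + u p * frechet_derivative m (at p) vx + 2 * ux p * m p
           = - E_eq \<nu> \<epsilon> U p"
proof -
  define s where "s = sqrt \<nu>"
  have s: "s > 0" "s \<noteq> 0" "\<nu> = s^2" using nu by (simp_all add: s_def)
  \<comment> \<open>The negative exponents are written the way simp normalises them.\<close>
  have powrs: "\<nu> powr (3/2) = s^3" "\<nu> powr (5/2) = s^5" "\<nu> powr - (5/2) = 1 / s^5"
      "\<nu> powr - 3 = 1 / s^6" "\<nu> powr - (1/2) = 1 / s"
    using powr_half_nat[OF nu, of 3] powr_half_nat[OF nu, of 5] powr_half_nat[OF nu, of 6]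
      powr_half_nat[OF nu, of 1]
    by (simp_all add: s_def powr_minus_divide)
  have diff: "u differentiable at p" "uxx differentiable at p"
    unfolding u_def pb_u_def uxx_def using s by (simp_all add: dU)
  have Du: "frechet_derivative u (at p) v = frechet_derivative U (at p) v / s" for v
    unfolding u_def pb_u_def s_def[symmetric]
    using s by (simp add: frechet_derivative_arith_apply dU)
  have Dux: "frechet_derivative ux (at p) v = s * frechet_derivative (pX U) (at p) v" for v
    unfolding ux_def s_def[symmetric] by (simp add: frechet_derivative_arith_apply dU)
  have Duxx: "frechet_derivative uxx (at p) v = s^3 * frechet_derivative (pX (pX U)) (at p) v"
    for v
    unfolding uxx_def powrs by (simp add: frechet_derivative_arith_apply dU)
  have Dm: "frechet_derivative m (at p) v
      = frechet_derivative uxx (at p) v - \<epsilon> * frechet_derivative u (at p) v" for v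
    unfolding m_def by (simp add: frechet_derivative_arith_apply diff)
  show "frechet_derivative u (at p) vx = ux p"
    and "frechet_derivative ux (at p) vx = uxx p"
    and "frechet_derivative m (at p) vt + u p * frechet_derivative m (at p) vx + 2 * ux p * m p
           = - E_eq \<nu> \<epsilon> U p"
    unfolding Dm Du Dux Duxx
    by (simp_all add: vx_def vt_def u_def ux_def uxx_def m_def pb_u_def E_eq_def powrs
      s_def[symmetric] frechet_derivative_pair_apply dU s(2))
      (simp_all add: s(2,3) field_simps, algebra+)
qed

(* With d/dX = a d/dx and d/dT = b d/dx + c d/dt, the form f dx + g dt pulls back to
   (a f) dX + (b f + c g) dT, and its exterior derivative to a c (g_x - f_t) dX ^ dT. *)
lemma pullback_form_derivative:
  fixes f g :: "real \<times> real \<Rightarrow> real"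
  assumes "(1, 0) = a *\<^sub>R vx" and "(0, 1) = b *\<^sub>R vx + c *\<^sub>R vt"
    and df: "f differentiable at p" and dg: "g differentiable at p"
  shows "pX (\<lambda>q. f q * b + g q * c) p - pT (\<lambda>q. f q * a) p
       = a * c * (frechet_derivative g (at p) vx - frechet_derivative f (at p) vt)"
proof -
  interpret f: linear "frechet_derivative f (at p)"
    by (rule linear_frechet_derivative[OF df])
  interpret g: linear "frechet_derivative g (at p)"
    by (rule linear_frechet_derivative[OF dg])
  show ?thesis
    unfolding pX_def pT_def assms(1,2)
    by (simp add: frechet_derivative_arith_apply df dg f.add f.scale g.add g.scale algebra_simps)
qed

lemma pulled_back_structure_equations:
  fixes \<nu> \<epsilon> \<alpha> \<beta> :: real and U :: "real \<times> real \<Rightarrow> real"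
  assumes nu: "\<nu> > 0" and eps: "\<epsilon> \<in> {0, 1}" and al: "\<alpha> \<noteq> 0"
    and con: "\<alpha>^2 + \<beta>^2 - 1 = \<epsilon> * ((\<beta> - 1) / \<alpha>)^2"
    and U: "smooth_on S U" and p: "p \<in> S" and E: "E_eq \<nu> \<epsilon> U p = 0"
  defines "A \<equiv> \<lambda>i q. pb_dX \<nu> \<epsilon> \<alpha> \<beta> i (jet_of U q)"
    and "B \<equiv> \<lambda>i q. pb_dT \<nu> \<epsilon> \<alpha> \<beta> i (jet_of U q)"
  shows "pX (B 1) p - pT (A 1) p = A 3 p * B 2 p - B 3 p * A 2 p"
    and "pX (B 2) p - pT (A 2) p = A 1 p * B 3 p - B 1 p * A 3 p"
    and "pX (B 3) p - pT (A 3) p = A 1 p * B 2 p - B 1 p * A 2 p"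
proof -
  have dU: "U differentiable at p" "pX U differentiable at p" "pX (pX U) differentiable at p"
    using U p by (meson smooth_on_imp_differentiable smooth_on_pX)+
  define u where "u = (\<lambda>q. pb_u \<nu> (U q))"
  define ux where "ux = (\<lambda>q. sqrt \<nu> * pX U q)"
  define uxx where "uxx = (\<lambda>q. \<nu> powr (3/2) * pX (pX U) q)"
  define \<kappa> where "\<kappa> = \<nu> powr (-3) - \<nu> powr (-1/2)"
  define vx where "vx = (\<nu>, 0::real)"
  define vt where "vt = (- sqrt \<nu> * \<nu> * \<kappa>, sqrt \<nu>)"
  define a where "a = (\<lambda>i q. om_dx \<epsilon> \<alpha> \<beta> i (u q) (ux q) (uxx q))"
  define b where "b = (\<lambda>i q. om_dt \<epsilon> \<alpha> \<beta> i (u q) (ux q) (uxx q))"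
  have A: "A i = (\<lambda>q. a i q * \<nu> powr (-1))" for i
    by (simp add: A_def a_def u_def ux_def uxx_def pb_dX_def jet_of_def)
  have B: "B i = (\<lambda>q. a i q * \<kappa> + b i q * \<nu> powr (-1/2))" for i
    by (simp add: B_def a_def b_def u_def ux_def uxx_def \<kappa>_def pb_dT_def jet_of_def)
  have diff: "u differentiable at p" "ux differentiable at p" "uxx differentiable at p"
    using nu by (simp_all add: u_def ux_def uxx_def pb_u_def dU)
  have diff_ab: "a i differentiable at p" "b i differentiable at p" for i
    unfolding a_def b_def om_dx_def om_dt_def Let_def
    using diff al by (cases "i = 1"; cases "i = 2"; simp)+
  have basis: "(1, 0) = \<nu> powr (-1) *\<^sub>R vx" "(0, 1) = \<kappa> *\<^sub>R vx + \<nu> powr (-1/2) *\<^sub>R vt"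
    using nu
    by (simp_all add: vx_def vt_def powr_minus_divide powr_half_sqrt[symmetric] powr_mult_base)
  note original =
    E_eq_in_original_coordinates[OF nu dU u_def ux_def uxx_def vx_def vt_def[unfolded \<kappa>_def]]
  have "frechet_derivative (\<lambda>q. uxx q - \<epsilon> * u q) (at p) vt
      + u p * frechet_derivative (\<lambda>q. uxx q - \<epsilon> * u q) (at p) vx
      + 2 * ux p * (uxx p - \<epsilon> * u p) = 0"
    using original(3)[of \<epsilon>] E by simp
  note original_structure =
    om_structure_equations[OF eps al con diff original(1,2) this a_def b_def]
  have pullback: "pX (B i) p - pT (A i) p = \<nu> powr (-1) * \<nu> powr (-1/2)
      * (frechet_derivative (b i) (at p) vx - frechet_derivative (a i) (at p) vt)" for i
    unfolding A B by (rule pullback_form_derivative[OF basis diff_ab])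
  have wedge: "A j p * B k p - B j p * A k p = \<nu> powr (-1) * \<nu> powr (-1/2)
      * (a j p * b k p - b j p * a k p)" for j k
    unfolding A B by (simp add: algebra_simps)
  show "pX (B 1) p - pT (A 1) p = A 3 p * B 2 p - B 3 p * A 2 p"
    and "pX (B 2) p - pT (A 2) p = A 1 p * B 3 p - B 1 p * A 3 p"
    and "pX (B 3) p - pT (A 3) p = A 1 p * B 2 p - B 1 p * A 2 p"
    by (simp_all only: pullback wedge original_structure)
qed

lemma real_polynomial_function_jet_coordinates:
  "real_polynomial_function (\<lambda>z::jet. fst (snd (snd z)))"
  "real_polynomial_function (\<lambda>z::jet. fst (snd (snd (snd z))))"
  "real_polynomial_function (\<lambda>z::jet. snd (snd (snd (snd z))))"
  by (simp_all add: real_polynomial_function_eq polynomial_function_bounded_linear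
      bounded_linear_fst_comp bounded_linear_snd_comp bounded_linear_snd)

lemma real_polynomial_function_pb_dX: "real_polynomial_function (pb_dX \<nu> \<epsilon> \<alpha> \<beta> i)"
  unfolding pb_dX_def om_dx_def pb_u_def Let_def case_prod_unfold
  by (cases "i = 1"; cases "i = 2")
    (simp_all add: real_polynomial_function_jet_coordinates real_polynomial_function.intros
      real_polynomial_function_diff real_polynomial_function_divide)

lemma real_polynomial_function_pb_dT: "real_polynomial_function (pb_dT \<nu> \<epsilon> \<alpha> \<beta> i)"
  unfolding pb_dT_def om_dx_def om_dt_def pb_u_def Let_def case_prod_unfold
  by (cases "i = 1"; cases "i = 2")
    (simp_all add: real_polynomial_function_jet_coordinates real_polynomial_function.intros
      real_polynomial_function_diff real_polynomial_function_minus real_polynomial_function_divide)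

lemma pb_dX_nonzero:
  assumes "\<nu> > 0" and "\<alpha> \<noteq> 0"
  shows "\<exists>z. pb_dX \<nu> \<epsilon> \<alpha> \<beta> i z \<noteq> 0"
proof (cases "i = 2")
  case True
  then have "pb_dX \<nu> \<epsilon> \<alpha> \<beta> i (0, 0, 0, 0, 0) \<noteq> 0"
    using assms by (simp add: pb_dX_def om_dx_def)
  then show ?thesis ..
next
  case False
  then have "pb_dX \<nu> \<epsilon> \<alpha> \<beta> i (0, 0, 0, 0, 1) - pb_dX \<nu> \<epsilon> \<alpha> \<beta> i (0, 0, 0, 0, 0)
      = \<nu> powr (3/2) * \<nu> powr (-1)"
    using assms by (simp add: pb_dX_def om_dx_def Let_def field_simps)
  moreover have "\<nu> powr (3/2) * \<nu> powr (-1) \<noteq> 0"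
    using assms by simp
  ultimately have "pb_dX \<nu> \<epsilon> \<alpha> \<beta> i (0, 0, 0, 0, 1) \<noteq> 0
      \<or> pb_dX \<nu> \<epsilon> \<alpha> \<beta> i (0, 0, 0, 0, 0) \<noteq> 0"
    by auto
  then show ?thesis
    by blast
qed

theorem corollary1:
  fixes \<nu> \<epsilon> \<alpha> \<beta> :: real
  assumes "\<nu> > 0" and "\<epsilon> \<in> {0, 1}" and "\<alpha> \<noteq> 0"
    and "\<alpha>^2 + \<beta>^2 - 1 = \<epsilon> * ((\<beta> - 1) / \<alpha>)^2"
  shows "describes_pss_with (E_eq \<nu> \<epsilon>) (pb_dX \<nu> \<epsilon> \<alpha> \<beta>) (pb_dT \<nu> \<epsilon> \<alpha> \<beta>)"
  unfolding describes_pss_with_def Let_def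
proof (intro conjI ballI allI impI)
  fix i :: nat
  show "smooth_on UNIV (pb_dX \<nu> \<epsilon> \<alpha> \<beta> i)" "smooth_on UNIV (pb_dT \<nu> \<epsilon> \<alpha> \<beta> i)"
    by (intro smooth_on_real_polynomial_function real_polynomial_function_pb_dX
        real_polynomial_function_pb_dT)+
  show "\<exists>z. pb_dX \<nu> \<epsilon> \<alpha> \<beta> i z \<noteq> 0 \<or> pb_dT \<nu> \<epsilon> \<alpha> \<beta> i z \<noteq> 0"
    using pb_dX_nonzero[OF assms(1,3)] by blast
qed (use pulled_back_structure_equations[OF assms] in blast)+

end
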